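(* For every real $\alpha\in(0,1]$ there exists an infinite $\mathbb{N}^*\setminus Q$--free set $Q\subseteq\mathbb{N}^*$ with $\nu(Q)=\alpha$.
   Context: $\mathbb{N}^*$ denotes the set of positive integers. A set $Q\subseteq\mathbb{N}^*$ is called $\mathbb{N}^*\setminus Q$--free if for every $q\in\mathbb{N}^*$: $q\in Q$ if and only if no $v\in\mathbb{N}^*\setminus Q$ divides $q$. For an infinite set $Q\subseteq\mathbb{N}^*$, its exponent of convergence is $\nu(Q)=\inf\{\nu>0:\sum_{q\in Q}q^{-\nu}<\infty\}$. *)

theory Defs
  imports "HOL-Analysis.Analysis"
begin

text \<open>Positive integers are represented as natural numbers > 0.
  A set Q of positive integers is (N* minus Q)-free if for every positive q:
  q is in Q iff no positive v outside Q divides q.\<close>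
definition complement_free :: "nat set \<Rightarrow> bool" where
  "complement_free Q \<longleftrightarrow>
     (\<forall>q::nat. q > 0 \<longrightarrow> (q \<in> Q \<longleftrightarrow> \<not> (\<exists>v::nat. v > 0 \<and> v \<notin> Q \<and> v dvd q)))"

text \<open>Exponent of convergence, valued in extended reals (infimum of the empty set is +infinity).\<close>
definition exp_conv :: "nat set \<Rightarrow> ereal" where
  "exp_conv Q = Inf {ereal \<nu> | \<nu>::real. \<nu> > 0 \<and> (\<lambda>q::nat. real q powr (- \<nu>)) summable_on Q}"

end

theory Submission
  imports Defs "HOL-Real_Asymp.Real_Asymp" "HOL-Computational_Algebra.Primes"
    "HOL-Library.Discrete_Functions"
begin

(*
  Split the positive integers into dyadic blocks [2^k, 2^(k+1)).  From the k-th
  block keep the primes of its longest initial segment containing at most 2^(a k) primes, and let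
  Q = {1} \<union> (kept primes).  A set consisting of 1 and primes is closed under taking divisors,
  and divisor-closed sets are exactly the (N* \<setminus> Q)-free ones.

  For \<nu> > a the k-th block contributes at most 2^(a k) 2^(-\<nu> k),
  a convergent geometric series.  For 0 < \<nu> < a, a block that is cut short holds more than
  2^(a k) - 1 primes, each at least 2^(-\<nu> (k+1)) in the series; these contributions tend to
  infinity, so summability forces all but finitely many blocks to be complete.  Then Q contains
  all sufficiently large primes, and since \<nu> \<le> 1 summability would contradict the divergence of
  the sum of prime reciprocals.
*)

text \<open>Divergence of the sum of prime reciprocals (Erdos).  If the primes \<open>p \<ge> M\<close> up to
  \<open>N = 2^t\<close> had reciprocal sum at most \<open>1/2\<close>, at most \<open>N/2\<close> numbers up to \<open>N\<close> would
  have such a prime factor, and the remaining \<open>M\<close>-smooth numbers are at most \<open>(t+1)^M\<close>,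
  which is impossible once \<open>2^t\<close> outgrows \<open>2 (t+1)^M\<close>.\<close>

lemma exponential_beats_polynomial: "\<exists>t::nat. 2 * (real t + 1) ^ k < 2 ^ t"
proof -
  have "eventually (\<lambda>t::nat. 2 * (real t + 1) powr real k < 2 powr real t) at_top"
    by real_asymp
  then obtain t where "2 * (real t + 1) powr real k < 2 powr real t"
    by (auto simp: eventually_sequentially)
  then show ?thesis
    by (intro exI[of _ t]) (simp add: powr_realpow)
qed

lemma card_multiples_le:
  assumes "p > 0"
  shows "real (card {n \<in> {1..N}. p dvd (n::nat)}) \<le> real N / real p"
proof -
  have "{n \<in> {1..N}. p dvd n} \<subseteq> (\<lambda>j. p * j) ` {1..N div p}"
  proof
    fix n assume n: "n \<in> {n \<in> {1..N}. p dvd n}"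
    then obtain j where j: "n = p * j" by auto
    with n have "j \<ge> 1" by (cases j) auto
    moreover from n j assms have "j \<le> N div p"
      by (metis atLeastAtMost_iff div_le_mono mem_Collect_eq nonzero_mult_div_cancel_left not_gr0)
    ultimately show "n \<in> (\<lambda>j. p * j) ` {1..N div p}" using j by auto
  qed
  then have "card {n \<in> {1..N}. p dvd n} \<le> card ((\<lambda>j. p * j) ` {1..N div p})"
    by (intro card_mono) auto
  also have "\<dots> \<le> N div p" using card_image_le[of "{1..N div p}" "\<lambda>j. p * j"] by simp
  finally have "real (card {n \<in> {1..N}. p dvd n}) \<le> real (N div p)" by linarith
  also have "\<dots> \<le> real N / real p" by (rule of_nat_div_le_of_nat)
  finally show ?thesis .
qed

lemma multiplicity_le_exponent:
  fixes p n t :: nat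
  assumes "prime p" and "0 < n" and "n \<le> 2^t"
  shows "multiplicity p n \<le> t"
proof -
  have "2 ^ multiplicity p n \<le> p ^ multiplicity p n"
    using prime_ge_2_nat[OF assms(1)] by (intro power_mono) auto
  also have "\<dots> \<le> n" using assms(2) by (intro dvd_imp_le multiplicity_dvd)
  also have "\<dots> \<le> 2^t" by (rule assms(3))
  finally show ?thesis by (simp add: power_le_imp_le_exp)
qed

text \<open>Numbers up to \<open>2^t\<close> all of whose prime factors are below \<open>M\<close> are determined by
  their \<open>M\<close> exponents, each at most \<open>t\<close>; hence there are at most \<open>(t + 1)^M\<close> of them.\<close>

lemma card_smooth_le:
  "card {n \<in> {1..2^t}. \<forall>p. prime p \<and> p dvd n \<longrightarrow> p < M} \<le> (t + 1) ^ M"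
proof -
  let ?A = "{n \<in> {1..2^t}. \<forall>p. prime p \<and> p dvd n \<longrightarrow> p < M}"
  define exponents where
    "exponents n = restrict (\<lambda>p. if prime p then multiplicity p n else 0) {..<M}" for n :: nat
  have "inj_on exponents ?A"
  proof
    fix x y assume x: "x \<in> ?A" and y: "y \<in> ?A" and eq: "exponents x = exponents y"
    show "x = y"
    proof (rule multiplicity_eq_nat)
      show "0 < x" "0 < y" using x y by auto
      fix p :: nat assume p: "prime p"
      show "multiplicity p x = multiplicity p y"
      proof (cases "p < M")
        case True
        then show ?thesis using fun_cong[OF eq, of p] p by (simp add: exponents_def)
      next
        case False
        then have "\<not> p dvd x" "\<not> p dvd y" using x y p by auto
        then show ?thesis by (simp add: not_dvd_imp_multiplicity_0)
      qed
    qed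
  qed
  moreover have "exponents ` ?A \<subseteq> PiE {..<M} (\<lambda>_. {..t})"
    using multiplicity_le_exponent by (auto simp: exponents_def)
  ultimately have "card ?A \<le> card (PiE {..<M} (\<lambda>_. {..t}))"
    by (intro card_inj_on_le) (simp_all add: finite_PiE)
  also have "\<dots> = (t + 1) ^ M" by (simp add: card_PiE)
  finally show ?thesis .
qed

lemma prime_reciprocals_dyadic_block:
  fixes M t :: nat
  assumes large: "2 * (real t + 1) ^ M < 2 ^ t"
  shows "1 / 2 < (\<Sum>p | prime p \<and> M \<le> p \<and> p \<le> 2^t. 1 / real p)"
proof (rule ccontr)
  define N :: nat where "N = 2^t"
  define P where "P = {p. prime p \<and> M \<le> p \<and> p \<le> N}"
  define A1 where "A1 = (\<Union>p\<in>P. {n \<in> {1..N}. p dvd n})"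
  define A2 where "A2 = {n \<in> {1..2^t}. \<forall>p. prime p \<and> p dvd n \<longrightarrow> p < M}"
  assume "\<not> ?thesis"
  then have small: "(\<Sum>p\<in>P. 1 / real p) \<le> 1 / 2" by (simp add: P_def N_def)
  have finP: "finite P" unfolding P_def by (rule finite_subset[of _ "{..N}"]) auto
  have cover: "{1..N} \<subseteq> A1 \<union> A2"
  proof
    fix n assume n: "n \<in> {1..N}"
    show "n \<in> A1 \<union> A2"
    proof (cases "\<exists>p. prime p \<and> p dvd n \<and> M \<le> p")
      case True
      then obtain p where p: "prime p" "p dvd n" "M \<le> p" by blast
      with n have "p \<in> P" using dvd_imp_le[of p n] by (auto simp: P_def)
      then show ?thesis using p n by (auto simp: A1_def)
    qed (use n in \<open>auto simp: A2_def N_def not_le\<close>)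
  qed
  have "card A1 \<le> (\<Sum>p\<in>P. card {n \<in> {1..N}. p dvd n})"
    unfolding A1_def by (rule card_UN_le[OF finP])
  then have "real (card A1) \<le> (\<Sum>p\<in>P. real (card {n \<in> {1..N}. p dvd n}))"
    by (metis of_nat_le_iff of_nat_sum)
  also have "\<dots> \<le> (\<Sum>p\<in>P. real N / real p)"
    by (intro sum_mono card_multiples_le) (auto simp: P_def prime_gt_0_nat)
  also have "\<dots> = real N * (\<Sum>p\<in>P. 1 / real p)" by (simp add: sum_distrib_left)
  also have "\<dots> \<le> real N * (1 / 2)" using small by (intro mult_left_mono) auto
  finally have card_A1: "real (card A1) \<le> real N / 2" by simp
  have "card A2 \<le> (t + 1) ^ M" unfolding A2_def by (rule card_smooth_le)
  then have card_A2: "real (card A2) \<le> (real t + 1) ^ M"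
    by (metis of_nat_1 of_nat_add of_nat_le_iff of_nat_power)
  have "N \<le> card (A1 \<union> A2)"
    using card_mono[OF _ cover] by (simp add: A1_def A2_def finP)
  also have "\<dots> \<le> card A1 + card A2" by (rule card_Un_le)
  finally have "real N \<le> real (card A1) + real (card A2)" by linarith
  then show False using card_A1 card_A2 large by (simp add: N_def)
qed

text \<open>Iterating on disjoint ranges, the primes \<open>p \<ge> M\<close> have arbitrarily large finite
  reciprocal sums.\<close>

lemma prime_reciprocals_unbounded:
  "\<exists>F. finite F \<and> F \<subseteq> {p. prime p \<and> M \<le> p} \<and> real n / 2 \<le> (\<Sum>p\<in>F. 1 / real p)"
proof (induction n arbitrary: M)
  case 0
  show ?case by (intro exI[of _ "{}"]) simp
next
  case (Suc n)
  obtain t where t: "2 * (real t + 1) ^ M < 2 ^ t" using exponential_beats_polynomial by blast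
  define F1 where "F1 = {p. prime p \<and> M \<le> p \<and> p \<le> 2^t}"
  obtain F2 where F2: "finite F2" "F2 \<subseteq> {p. prime p \<and> Suc (2^t + M) \<le> p}"
    "real n / 2 \<le> (\<Sum>p\<in>F2. 1 / real p)"
    using Suc.IH by blast
  have fin1: "finite F1" unfolding F1_def by (rule finite_subset[of _ "{..2^t}"]) auto
  have disj: "F1 \<inter> F2 = {}" using F2(2) by (auto simp: F1_def)
  have "(\<Sum>p\<in>F1 \<union> F2. 1 / real p) = (\<Sum>p\<in>F1. 1 / real p) + (\<Sum>p\<in>F2. 1 / real p)"
    using fin1 F2(1) disj by (rule sum.union_disjoint)
  moreover have "1 / 2 < (\<Sum>p\<in>F1. 1 / real p)"
    unfolding F1_def by (rule prime_reciprocals_dyadic_block[OF t])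
  moreover have "F1 \<union> F2 \<subseteq> {p. prime p \<and> M \<le> p}" using F2(2) by (auto simp: F1_def)
  ultimately have "real (Suc n) / 2 \<le> (\<Sum>p\<in>F1 \<union> F2. 1 / real p)"
    using F2(3) by simp
  then show ?case using \<open>F1 \<union> F2 \<subseteq> _\<close> fin1 F2(1)
    by (intro exI[of _ "F1 \<union> F2"]) simp
qed

corollary prime_reciprocals_not_summable:
  "\<not> (\<lambda>p. 1 / real p) summable_on {p::nat. prime p \<and> M \<le> p}"
proof
  assume summable: "(\<lambda>p. 1 / real p) summable_on {p::nat. prime p \<and> M \<le> p}"
  define B where "B = infsum (\<lambda>p. 1 / real p) {p::nat. prime p \<and> M \<le> p}"
  obtain n :: nat where n: "2 * B < real n" using reals_Archimedean2[of "2 * B"] by blast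
  obtain F where F: "finite F" "F \<subseteq> {p. prime p \<and> M \<le> p}"
    "real n / 2 \<le> (\<Sum>p\<in>F. 1 / real p)"
    using prime_reciprocals_unbounded[of M n] by blast
  have "(\<Sum>p\<in>F. 1 / real p) \<le> B"
    unfolding B_def using summable F(1,2) by (rule finite_sum_le_infsum) simp
  then show False using n F(3) by linarith
qed

definition dyadic_primes :: "nat \<Rightarrow> nat \<Rightarrow> nat set" where
  "dyadic_primes k L = {p. prime p \<and> 2^k \<le> p \<and> p < 2^k + L}"

definition block_length :: "real \<Rightarrow> nat \<Rightarrow> nat" where
  "block_length a k =
     Max {L. L \<le> 2^k \<and> real (card (dyadic_primes k L)) \<le> 2 powr (a * real k)}"

definition block :: "real \<Rightarrow> nat \<Rightarrow> nat set" where
  "block a k = dyadic_primes k (block_length a k)"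

definition prime_selection :: "real \<Rightarrow> nat set" where
  "prime_selection a = insert 1 (\<Union>k. block a k)"

lemma finite_dyadic_primes: "finite (dyadic_primes k L)"
  unfolding dyadic_primes_def by (rule finite_subset[of _ "{..<2^k + L}"]) auto

lemma card_dyadic_primes_Suc: "card (dyadic_primes k (Suc L)) \<le> Suc (card (dyadic_primes k L))"
proof -
  have "dyadic_primes k (Suc L) \<subseteq> insert (2^k + L) (dyadic_primes k L)"
    by (auto simp: dyadic_primes_def)
  then have "card (dyadic_primes k (Suc L)) \<le> card (insert (2^k + L) (dyadic_primes k L))"
    by (intro card_mono) (simp_all add: finite_dyadic_primes)
  also have "\<dots> \<le> Suc (card (dyadic_primes k L))"
    by (simp add: card_insert_if finite_dyadic_primes)
  finally show ?thesis .
qed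

lemma block_length_admissible:
  "block_length a k \<le> 2^k \<and> real (card (block a k)) \<le> 2 powr (a * real k)"
proof -
  let ?S = "{L. L \<le> 2^k \<and> real (card (dyadic_primes k L)) \<le> 2 powr (a * real k)}"
  have "dyadic_primes k 0 = {}" by (auto simp: dyadic_primes_def)
  then have "0 \<in> ?S" by simp
  moreover have "finite ?S" by (rule finite_subset[of _ "{..2^k}"]) auto
  ultimately have "block_length a k \<in> ?S" unfolding block_length_def by (intro Max_in) auto
  then show ?thesis by (simp add: block_def)
qed

lemma block_length_maximal:
  assumes "L \<le> 2^k" and "real (card (dyadic_primes k L)) \<le> 2 powr (a * real k)"
  shows "L \<le> block_length a k"
  unfolding block_length_def using assms
  by (intro Max_ge) (auto intro: finite_subset[of _ "{..2^k}"])

lemma finite_block: "finite (block a k)"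
  unfolding block_def by (rule finite_dyadic_primes)

lemma block_subset: "block a k \<subseteq> {p. prime p \<and> 2^k \<le> p \<and> p < 2^(k+1)}"
  using block_length_admissible[of a k] by (auto simp: block_def dyadic_primes_def)

text \<open>Each prime lies in the block indexed by its binary logarithm, so blocks are disjoint.\<close>

lemma floor_log_block: "p \<in> block a k \<Longrightarrow> floor_log p = k"
  using block_subset[of a k] by (intro floor_log_eqI) auto

text \<open>A block that is cut short is nearly saturated: by maximality, one more number would
  push the prime count over \<open>2^(a k)\<close>.\<close>

lemma block_card_lower:
  assumes "block_length a k < 2^k"
  shows "2 powr (a * real k) - 1 < real (card (block a k))"
proof -
  have "\<not> real (card (dyadic_primes k (Suc (block_length a k)))) \<le> 2 powr (a * real k)"
    using block_length_maximal[of "Suc (block_length a k)" k a] assms by auto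
  with card_dyadic_primes_Suc[of k "block_length a k"] show ?thesis
    unfolding block_def by linarith
qed

lemma block_full:
  assumes "block_length a k = 2^k" "prime p" "floor_log p = k"
  shows "p \<in> block a k"
proof -
  have "p > 0" using assms(2) prime_gt_0_nat by blast
  then show ?thesis
    using assms floor_log_exp2_le[of p] floor_log_exp2_gt[of p]
    by (auto simp: block_def dyadic_primes_def)
qed

lemma block_sum_upper:
  assumes "\<nu> > 0"
  shows "(\<Sum>p\<in>block a k. real p powr (-\<nu>)) \<le> (2 powr (a - \<nu>)) ^ k"
proof -
  have "(\<Sum>p\<in>block a k. real p powr (-\<nu>)) \<le> real (card (block a k)) * (2 powr real k) powr (-\<nu>)"
  proof (rule sum_bounded_above)
    fix p assume "p \<in> block a k"
    then have "2 powr real k \<le> real p"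
      using block_subset[of a k] by (auto simp: powr_realpow simp flip: of_nat_le_iff)
    then show "real p powr (-\<nu>) \<le> (2 powr real k) powr (-\<nu>)"
      using assms by (intro powr_mono2') auto
  qed
  also have "\<dots> \<le> 2 powr (a * real k) * (2 powr real k) powr (-\<nu>)"
    using block_length_admissible[of a k] by (intro mult_right_mono) auto
  also have "\<dots> = (2 powr (a - \<nu>)) ^ k"
    by (simp add: powr_powr powr_add[symmetric] powr_realpow[symmetric] algebra_simps)
  finally show ?thesis .
qed

lemma block_sum_lower:
  assumes "\<nu> \<ge> 0" and "block_length a k < 2^k"
  shows "(2 powr (a * real k) - 1) * 2 powr (-\<nu> * (real k + 1))
           \<le> (\<Sum>p\<in>block a k. real p powr (-\<nu>))"
proof -
  have "(2 powr (a * real k) - 1) * 2 powr (-\<nu> * (real k + 1))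
          \<le> real (card (block a k)) * 2 powr (-\<nu> * (real k + 1))"
    using block_card_lower[OF assms(2)] by (intro mult_right_mono) auto
  also have "\<dots> \<le> (\<Sum>p\<in>block a k. real p powr (-\<nu>))"
  proof (rule sum_bounded_below)
    fix p assume p: "p \<in> block a k"
    then have "0 < p" "p < 2^(k+1)" using block_subset[of a k] prime_gt_0_nat by auto
    have "real p \<le> real (2 ^ (k + 1))" using \<open>p < 2^(k+1)\<close> by linarith
    also have "\<dots> = 2 ^ (k + 1)" by simp
    also have "\<dots> = 2 powr (real k + 1)" by (simp add: powr_add powr_realpow)
    finally have "real p \<le> 2 powr (real k + 1)" .
    then have "(2 powr (real k + 1)) powr (-\<nu>) \<le> real p powr (-\<nu>)"
      using assms \<open>0 < p\<close> by (intro powr_mono2') auto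
    then show "2 powr (-\<nu> * (real k + 1)) \<le> real p powr (-\<nu>)"
      by (simp add: powr_powr algebra_simps)
  qed
  finally show ?thesis .
qed

text \<open>Since the blocks are disjoint and finite, summability over the selected set is
  summability of the sequence of block contributions.\<close>

lemma summable_on_prime_selection_iff:
  "(\<lambda>q::nat. real q powr (-\<nu>)) summable_on prime_selection a
     \<longleftrightarrow> summable (\<lambda>k. \<Sum>p\<in>block a k. real p powr (-\<nu>))"
proof -
  let ?f = "\<lambda>q::nat. real q powr (-\<nu>)"
  have disjoint: "disjoint_family_on (block a) UNIV"
    unfolding disjoint_family_on_def by (metis disjoint_iff floor_log_block)
  have "?f summable_on prime_selection a \<longleftrightarrow> ?f summable_on (\<Union>k. block a k)"
    unfolding prime_selection_def by (rule summable_on_insert_iff)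
  also have "\<dots> \<longleftrightarrow> (\<lambda>k. \<Sum>p\<in>block a k. ?f p) summable_on UNIV"
    by (intro summable_on_Union_iff disjoint has_sum_finite) (simp_all add: finite_block)
  also have "\<dots> \<longleftrightarrow> summable (\<lambda>k. \<Sum>p\<in>block a k. ?f p)"
    by (intro summable_on_UNIV_nonneg_real_iff sum_nonneg) simp
  finally show ?thesis .
qed

lemma prime_selection_summable:
  assumes "a < \<nu>" and "0 < \<nu>"
  shows "(\<lambda>q::nat. real q powr (-\<nu>)) summable_on prime_selection a"
  unfolding summable_on_prime_selection_iff
proof (rule summable_comparison_test)
  show "summable (\<lambda>k. (2 powr (a - \<nu>)) ^ k)"
    using assms by (intro summable_geometric) (simp add: powr_less_one)
  show "\<exists>N. \<forall>k\<ge>N. norm (\<Sum>p\<in>block a k. real p powr (-\<nu>)) \<le> (2 powr (a - \<nu>)) ^ k"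
    using block_sum_upper[OF assms(2)] by (simp add: sum_nonneg)
qed

text \<open>Below \<open>a\<close>, the contribution of a cut-short block tends to infinity, while under
  summability the contributions tend to zero; so almost all blocks must be complete.\<close>

lemma prime_selection_eventually_full:
  assumes "0 < \<nu>" and "\<nu> < a"
    and "(\<lambda>q::nat. real q powr (-\<nu>)) summable_on prime_selection a"
  shows "eventually (\<lambda>k. block_length a k = 2^k) at_top"
proof -
  have "(\<lambda>k. \<Sum>p\<in>block a k. real p powr (-\<nu>)) \<longlonglongrightarrow> 0"
    using assms(3) by (intro summable_LIMSEQ_zero) (simp add: summable_on_prime_selection_iff)
  then have "eventually (\<lambda>k. (\<Sum>p\<in>block a k. real p powr (-\<nu>)) < 1) at_top"
    by (rule order_tendstoD) simp
  moreover have "eventually (\<lambda>k::nat. 1 \<le> (2 powr (a * real k) - 1) * 2 powr (-\<nu> * (real k + 1))) at_top"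
    using assms(1,2) by real_asymp
  ultimately show ?thesis
  proof eventually_elim
    case (elim k)
    then show ?case
      using block_sum_lower[of \<nu> a k] block_length_admissible[of a k] assms(1) by fastforce
  qed
qed

text \<open>Divergence below \<open>a \<le> 1\<close>: otherwise all large primes would be selected and,
  as \<open>1/p \<le> p^(-\<nu>)\<close>, their reciprocals would be summable.\<close>

lemma prime_selection_not_summable:
  assumes "0 < \<nu>" and "\<nu> < a" and "a \<le> 1"
  shows "\<not> (\<lambda>q::nat. real q powr (-\<nu>)) summable_on prime_selection a"
proof
  assume summable: "(\<lambda>q::nat. real q powr (-\<nu>)) summable_on prime_selection a"
  obtain K where full: "\<And>k. K \<le> k \<Longrightarrow> block_length a k = 2^k"
    using prime_selection_eventually_full[OF assms(1,2) summable]
    by (auto simp: eventually_at_top_linorder)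
  have large_primes: "{p. prime p \<and> 2^K \<le> p} \<subseteq> prime_selection a"
  proof
    fix p :: nat assume p: "p \<in> {p. prime p \<and> 2^K \<le> p}"
    then have "K \<le> floor_log p"
      using floor_log_le_iff[of "2^K" p] by (simp add: floor_log_power)
    then have "p \<in> block a (floor_log p)" using p full by (intro block_full) auto
    then show "p \<in> prime_selection a" by (auto simp: prime_selection_def)
  qed
  have "(\<lambda>p. 1 / real p) summable_on {p. prime p \<and> 2^K \<le> p}"
  proof (rule summable_on_comparison_test)
    show "(\<lambda>q::nat. real q powr (-\<nu>)) summable_on {p. prime p \<and> 2^K \<le> p}"
      using summable large_primes by (rule summable_on_subset)
    fix p :: nat assume "p \<in> {p. prime p \<and> 2^K \<le> p}"
    then have "1 \<le> real p" using prime_ge_1_nat by simp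
    then have "real p powr (-1) \<le> real p powr (-\<nu>)" using assms by (intro powr_mono) auto
    then show "1 / real p \<le> real p powr (-\<nu>)" using \<open>1 \<le> real p\<close> by (simp add: powr_minus_divide)
  qed simp
  then show False using prime_reciprocals_not_summable by blast
qed

text \<open>A set of positive integers closed under taking divisors is free of its complement:
  an element has only divisors in the set, and a non-element divides itself.\<close>

lemma divisor_closed_imp_complement_free:
  assumes "\<And>q d. q \<in> Q \<Longrightarrow> 0 < q \<Longrightarrow> d dvd q \<Longrightarrow> d \<in> Q"
  shows "complement_free Q"
  unfolding complement_free_def
proof (intro allI impI iffI)
  fix q :: nat assume "0 < q" and "q \<in> Q"
  then show "\<not> (\<exists>v. 0 < v \<and> v \<notin> Q \<and> v dvd q)" using assms by metis
next
  fix q :: nat assume "0 < q" and "\<not> (\<exists>v. 0 < v \<and> v \<notin> Q \<and> v dvd q)"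
  then show "q \<in> Q" using dvd_refl by metis
qed

text \<open>The selected set consists of \<open>1\<close> and primes, hence is divisor-closed.\<close>

lemma prime_selection_divisor_closed:
  assumes "q \<in> prime_selection a" and "d dvd q"
  shows "d \<in> prime_selection a"
proof -
  have "q = 1 \<or> prime q" using assms(1) block_subset by (auto simp: prime_selection_def)
  then have "d = 1 \<or> d = q" using assms(2) prime_nat_iff by auto
  then show ?thesis using assms(1) by (auto simp: prime_selection_def)
qed

lemma exp_conv_eqI:
  assumes "0 < \<alpha>"
    and "\<And>\<nu>. \<alpha> < \<nu> \<Longrightarrow> (\<lambda>q::nat. real q powr (-\<nu>)) summable_on Q"
    and "\<And>\<nu>. 0 < \<nu> \<Longrightarrow> \<nu> < \<alpha> \<Longrightarrow> \<not> (\<lambda>q::nat. real q powr (-\<nu>)) summable_on Q"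
  shows "exp_conv Q = ereal \<alpha>"
  unfolding exp_conv_def
proof (rule Inf_eqI)
  fix x assume "x \<in> {ereal \<nu> |\<nu>. 0 < \<nu> \<and> (\<lambda>q. real q powr - \<nu>) summable_on Q}"
  then obtain \<nu> where "x = ereal \<nu>" "0 < \<nu>" "(\<lambda>q::nat. real q powr - \<nu>) summable_on Q"
    by blast
  moreover from this have "\<not> \<nu> < \<alpha>" using assms(3) by blast
  ultimately show "ereal \<alpha> \<le> x" by simp
next
  fix y
  assume lower: "\<And>x. x \<in> {ereal \<nu> |\<nu>. 0 < \<nu> \<and> (\<lambda>q. real q powr - \<nu>) summable_on Q} \<Longrightarrow> y \<le> x"
  show "y \<le> ereal \<alpha>"
  proof (rule ereal_le_epsilon2)
    fix e :: real assume "0 < e"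
    then have "0 < \<alpha> + e" "(\<lambda>q::nat. real q powr - (\<alpha> + e)) summable_on Q"
      using assms(1) assms(2)[of "\<alpha> + e"] by simp_all
    then have "y \<le> ereal (\<alpha> + e)" by (intro lower) blast
    then show "y \<le> ereal \<alpha> + ereal e" by simp
  qed
qed

text \<open>Main theorem: the selection for \<open>a = \<alpha>\<close> has exponent of convergence \<open>\<alpha>\<close>; it is
  infinite because its series diverges at the exponent \<open>\<alpha>/2\<close>.\<close>

theorem mainTheorem7:
  fixes \<alpha> :: real
  assumes "0 < \<alpha>" and "\<alpha> \<le> 1"
  shows "\<exists>Q::nat set. Q \<subseteq> {0<..} \<and> infinite Q \<and> complement_free Q \<and> exp_conv Q = ereal \<alpha>"
proof (intro exI conjI)
  let ?Q = "prime_selection \<alpha>"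
  show "?Q \<subseteq> {0<..}"
    using block_subset prime_gt_0_nat by (auto simp: prime_selection_def)
  show "infinite ?Q"
  proof
    assume "finite ?Q"
    then have "(\<lambda>q::nat. real q powr (-(\<alpha> / 2))) summable_on ?Q" by (rule summable_on_finite)
    then show False using prime_selection_not_summable[of "\<alpha> / 2" \<alpha>] assms by simp
  qed
  show "complement_free ?Q"
    using prime_selection_divisor_closed by (rule divisor_closed_imp_complement_free)
  show "exp_conv ?Q = ereal \<alpha>"
  proof (rule exp_conv_eqI)
    fix \<nu> assume "\<alpha> < \<nu>"
    then show "(\<lambda>q::nat. real q powr (-\<nu>)) summable_on ?Q"
      using assms by (intro prime_selection_summable) simp_all
  next
    fix \<nu> assume "0 < \<nu>" "\<nu> < \<alpha>"
    then show "\<not> (\<lambda>q::nat. real q powr (-\<nu>)) summable_on ?Q"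
      using assms by (intro prime_selection_not_summable) simp_all
  qed (use assms in simp)
qed

end
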